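(* Let $\kappa_*>0$ and let $H^*$ be a probability measure on $(0,\infty)$. Consider $(X_i,\theta_i)$ generated by $X_i\mid\theta_i\sim\mathrm{Poi}(\theta_i)$, $\theta_i\mid\lambda_i\sim\mathrm{Gamma}(\kappa_*,\lambda_i)$ (shape-rate), $\lambda_i\sim H^*$. Let $0<\beta<1$. Then there exists a unique constant $k^*\ge0$ such that the set-valued rule $$\mathcal I^*(x)=\{\theta\ge0:\pi_{H^*}(\theta\mid x)\ge k^*\},\qquad x=0,1,2,\dots,$$ satisfies $\mathbb P_{H^*}(\theta_i\in\mathcal I^*(X_i))=1-\beta$. Moreover, $\mathcal I^*$ solves, up to Lebesgue-null sets, the problem of minimizing $\mathbb E_{H^*}[|\mathcal I(X_i)|]$ over all measurable set-valued rules $\mathcal I:x\mapsto\mathcal I(x)\subset(0,\infty)$ subject to $\mathbb P_{H^*}(\theta_i\in\mathcal I(X_i))\ge1-\beta$.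
   Context: $f_{H^*}(x)=\int\frac{\Gamma(x+\kappa_* )}{x!\,\Gamma(\kappa_* )}\left(\frac{1}{\lambda+1}\right)^x\left(\frac{\lambda}{\lambda+1}\right)^{\kappa_*}dH^*(\lambda)$ is the marginal pmf of $X_i$; $g_{H^*}(\theta)=\int\frac{\lambda^{\kappa_*}}{\Gamma(\kappa_* )}\theta^{\kappa_*-1}e^{-\lambda\theta}dH^*(\lambda)$ is the prior density of $\theta_i$; with $p_\theta(x)=e^{-\theta}\theta^x/x!$, $\pi_{H^*}(\theta\mid x)=p_\theta(x)g_{H^*}(\theta)/f_{H^*}(x)$ for $\theta>0$ is the posterior density. Probabilities are under the joint law of $(\theta_i,X_i)$; $|A|$ denotes the Lebesgue measure of $A\subset(0,\infty)$. *)

theory Defs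
  imports "HOL-Probability.Probability"
begin

definition pois :: "real \<Rightarrow> nat \<Rightarrow> real" where
  "pois \<theta> x = exp (- \<theta>) * \<theta> ^ x / fact x"

text \<open>Marginal pmf f_H(x) of X_i.\<close>
definition fH :: "real \<Rightarrow> real measure \<Rightarrow> nat \<Rightarrow> real" where
  "fH \<kappa> H x = (\<integral>l. Gamma (real x + \<kappa>) / (fact x * Gamma \<kappa>)
        * (1 / (l + 1)) ^ x * (l / (l + 1)) powr \<kappa> \<partial>H)"

definition gH :: "real \<Rightarrow> real measure \<Rightarrow> real \<Rightarrow> real" where
  "gH \<kappa> H \<theta> = (\<integral>l. l powr \<kappa> / Gamma \<kappa> * \<theta> powr (\<kappa> - 1) * exp (- l * \<theta>) \<partial>H)"

definition postH :: "real \<Rightarrow> real measure \<Rightarrow> nat \<Rightarrow> real \<Rightarrow> real" where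
  "postH \<kappa> H x \<theta> = (if \<theta> > 0 then pois \<theta> x * gH \<kappa> H \<theta> / fH \<kappa> H x else 0)"

definition jointH :: "real \<Rightarrow> real measure \<Rightarrow> (real \<times> nat) measure" where
  "jointH \<kappa> H = density (lborel \<Otimes>\<^sub>M count_space UNIV)
     (\<lambda>(\<theta>, x). ennreal (if \<theta> > 0 then gH \<kappa> H \<theta> * pois \<theta> x else 0))"

definition coverage :: "real \<Rightarrow> real measure \<Rightarrow> (nat \<Rightarrow> real set) \<Rightarrow> real" where
  "coverage \<kappa> H I = measure (jointH \<kappa> H) {(\<theta>, x). \<theta> \<in> I x}"

definition exp_length :: "real \<Rightarrow> real measure \<Rightarrow> (nat \<Rightarrow> real set) \<Rightarrow> ennreal" where
  "exp_length \<kappa> H I = (\<integral>\<^sup>+ (\<theta>, x). emeasure lborel (I x) \<partial>jointH \<kappa> H)"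

definition hpd_rule :: "real \<Rightarrow> real measure \<Rightarrow> real \<Rightarrow> nat \<Rightarrow> real set" where
  "hpd_rule \<kappa> H k x = {\<theta>. \<theta> \<ge> 0 \<and> postH \<kappa> H x \<theta> \<ge> k}"

definition meas_rule :: "(nat \<Rightarrow> real set) \<Rightarrow> bool" where
  "meas_rule I \<longleftrightarrow> (\<forall>x. I x \<in> sets lborel \<and> I x \<subseteq> {0<..})"

end

theory Submission
  imports Defs "HOL-Complex_Analysis.Conformal_Mappings" "HOL-Real_Asymp.Real_Asymp"
begin

(*
  Write L(t) for the integral of l^kappa * exp (- l * t) dH(l). Given X = x, the posterior density
  of theta is proportional to theta^(x + kappa - 1) * exp (- theta) * L(theta). Since L extends
  holomorphically to the right half-plane, a level set of the posterior of positive Lebesgue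
  measure would have an accumulation point in (0, infinity), and analytic continuation would make
  the posterior constant, contradicting its decay at infinity. So the posterior, viewed as a random
  variable under the joint law, has no atoms; its distribution function is continuous and the
  intermediate value theorem yields a level k with coverage 1 - beta. The coverage is strictly
  decreasing in k while positive, because the continuous posterior crosses every intermediate level
  on an open set of positive mass; this gives uniqueness. Optimality is the bathtub (Neyman-Pearson)
  argument: for each x, with c = k * f_H(x) and B the superlevel set {density >= c},
  c |A| + P(B) = c |B| + P(A) + slack with nonnegative slack, so a rule covering at least as much
  as B has at least its expected length, with equality only if the slack, hence A - B and B - A,
  is null.
*)

lemma powr_mult_exp_le:
  fixes l a c :: real
  assumes "l > 0" "a > 0" "c > 0"
  shows "l powr a * exp (- (c * l)) \<le> (a / c) powr a"
proof -
  have "c * l / a \<le> exp (c * l / a)"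
    using exp_ge_add_one_self[of "c * l / a"] by linarith
  moreover have "l = (a / c) * (c * l / a)" using assms by (simp add: field_simps)
  ultimately have "l \<le> (a / c) * exp (c * l / a)"
    using assms by (metis divide_nonneg_pos less_eq_real_def mult_left_mono)
  then have "l * exp (- (c * l / a)) \<le> a / c" by (simp add: exp_minus field_simps)
  then have "(l * exp (- (c * l / a))) powr a \<le> (a / c) powr a"
    using assms by (intro powr_mono2) auto
  moreover have "(l * exp (- (c * l / a))) powr a = l powr a * exp (- (c * l))"
    using assms by (simp add: powr_mult exp_powr_real)
  ultimately show ?thesis by simp
qed

lemma nn_integral_powr_exp_Gamma:
  fixes s c :: real
  assumes s: "s > 0" and c: "c > 0"
  shows "(\<integral>\<^sup>+t. ennreal (if t > 0 then t powr (s - 1) * exp (- (c * t)) else 0) \<partial>lborel)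
       = ennreal (Gamma s / c powr s)"
    (is "?J = _")
proof -
  define f where "f u = ennreal (indicator {0..} u * u powr (s - 1) / exp u)" for u :: real
  have scaled: "f (c * t) = ennreal (c powr (s - 1))
      * ennreal (if t > 0 then t powr (s - 1) * exp (- (c * t)) else 0)" for t
    using c by (cases t "0 :: real" rule: linorder_cases)
      (auto simp: f_def indicator_def powr_mult exp_minus divide_simps zero_le_mult_iff
        simp flip: ennreal_mult)
  have "ennreal (Gamma s) = (\<integral>\<^sup>+u. f u \<partial>lborel)"
    unfolding f_def by (rule Gamma_conv_nn_integral_real[OF s])
  also have "\<dots> = ennreal c * (\<integral>\<^sup>+t. f (c * t) \<partial>lborel)"
    using nn_integral_real_affine[of f c 0] c unfolding f_def by simp
  also have "\<dots> = ennreal c * (ennreal (c powr (s - 1)) * ?J)"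
    unfolding scaled by (subst nn_integral_cmult) auto
  also have "\<dots> = ennreal (c powr s) * ?J"
    using c by (simp add: mult.assoc[symmetric] powr_diff flip: ennreal_mult)
  finally have Gamma_eq: "ennreal (Gamma s) = ennreal (c powr s) * ?J" .
  have "?J = ennreal (1 / c powr s) * (ennreal (c powr s) * ?J)"
    using c by (simp add: mult.assoc[symmetric] flip: ennreal_mult)
  also have "\<dots> = ennreal (Gamma s / c powr s)"
    using c Gamma_real_pos[OF s] by (simp add: Gamma_eq[symmetric] flip: ennreal_mult)
  finally show ?thesis .
qed

lemma measurable_pair_count_space_nat:
  fixes g :: "nat \<Rightarrow> 'a \<Rightarrow> 'b::topological_space"
  assumes "\<And>x. g x \<in> borel_measurable M"
  shows "(\<lambda>p. g (snd p) (fst p)) \<in> borel_measurable (M \<Otimes>\<^sub>M count_space UNIV)"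
  by (rule measurable_compose_countable[where f="\<lambda>i p. g i (fst p)" and g=snd])
     (auto intro: measurable_compose[OF measurable_fst assms])

lemma sets_pair_count_space_nat:
  assumes "\<And>x::nat. A x \<in> sets M"
  shows "{(t, x). t \<in> A x} \<in> sets (M \<Otimes>\<^sub>M count_space UNIV)"
proof -
  have "{(t, x). t \<in> A x} = (\<Union>x. A x \<times> {x})" by auto
  then show ?thesis using assms by auto
qed

lemma nn_integral_pair_count_space_nat:
  assumes "sigma_finite_measure M" and f: "f \<in> borel_measurable (M \<Otimes>\<^sub>M count_space UNIV)"
  shows "(\<integral>\<^sup>+p. f p \<partial>(M \<Otimes>\<^sub>M count_space UNIV)) = (\<Sum>x::nat. \<integral>\<^sup>+t. f (t, x) \<partial>M)"
proof -
  interpret pair_sigma_finite M "count_space (UNIV :: nat set)"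
    using assms(1) by (simp add: pair_sigma_finite_def sigma_finite_measure_count_space_countable)
  show ?thesis by (simp add: nn_integral_snd[OF f, symmetric] nn_integral_count_space_nat)
qed

section \<open>Superlevel sets of densities\<close>

lemma null_set_if_set_nn_integral_eq_0:
  fixes f :: "'a \<Rightarrow> real"
  assumes "A \<in> sets M" "f \<in> borel_measurable M" "AE t in M. t \<in> A \<longrightarrow> 0 < f t"
    and "(\<integral>\<^sup>+t\<in>A. f t \<partial>M) = 0"
  shows "A \<in> null_sets M"
proof -
  have "AE t in M. ennreal (f t) * indicator A t = 0"
    using assms by (subst nn_integral_0_iff_AE[symmetric]) auto
  with assms(3) have "AE t in M. t \<notin> A"
    by eventually_elim (auto simp: indicator_def)
  then show ?thesis using assms(1) by (simp add: AE_iff_null_sets)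
qed

lemma superlevel_exchange:
  fixes f :: "'a \<Rightarrow> real"
  assumes f: "f \<in> borel_measurable M" "\<And>t. 0 \<le> f t" and c: "0 \<le> c"
    and A: "A \<in> sets M" and B: "B = {t \<in> space M. c \<le> f t}"
  shows "ennreal c * emeasure M A + (\<integral>\<^sup>+t\<in>B. f t \<partial>M)
       = ennreal c * emeasure M B + (\<integral>\<^sup>+t\<in>A. f t \<partial>M)
         + (\<integral>\<^sup>+t\<in>A - B. (c - f t) \<partial>M) + (\<integral>\<^sup>+t\<in>B - A. (f t - c) \<partial>M)"
proof -
  define \<nu> where "\<nu> = density M f"
  have B_sets: "B \<in> sets M" unfolding B using f by measurable
  have \<nu>: "(\<integral>\<^sup>+t\<in>X. f t \<partial>M) = emeasure \<nu> X" if "X \<in> sets M" for X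
    unfolding \<nu>_def using f that by (simp add: emeasure_density)
  have split: "emeasure N X = emeasure N (X \<inter> Y) + emeasure N (X - Y)"
    if "sets N = sets M" "X \<in> sets M" "Y \<in> sets M" for N :: "'a measure" and X Y
    using that by (subst plus_emeasure) (auto intro!: arg_cong[where f="emeasure N"])
  have below: "ennreal c * emeasure M (A - B)
      = emeasure \<nu> (A - B) + (\<integral>\<^sup>+t\<in>A - B. (c - f t) \<partial>M)"
  proof -
    have "ennreal c * emeasure M (A - B) = (\<integral>\<^sup>+t\<in>A - B. c \<partial>M)"
      using A B_sets by (simp add: nn_integral_cmult_indicator)
    also have "\<dots> = (\<integral>\<^sup>+t. ennreal (f t) * indicator (A - B) t
        + ennreal (c - f t) * indicator (A - B) t \<partial>M)"
      using A f(2) by (intro nn_integral_cong) (auto simp: B indicator_def simp flip: ennreal_plus)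
    also have "\<dots> = emeasure \<nu> (A - B) + (\<integral>\<^sup>+t\<in>A - B. (c - f t) \<partial>M)"
      using A B_sets f by (subst nn_integral_add) (auto simp: \<nu>[symmetric])
    finally show ?thesis .
  qed
  have above: "emeasure \<nu> (B - A)
      = ennreal c * emeasure M (B - A) + (\<integral>\<^sup>+t\<in>B - A. (f t - c) \<partial>M)"
  proof -
    have "emeasure \<nu> (B - A) = (\<integral>\<^sup>+t. ennreal c * indicator (B - A) t
        + ennreal (f t - c) * indicator (B - A) t \<partial>M)"
      using A B_sets c by (subst \<nu>[symmetric]) (auto intro!: nn_integral_cong
          simp: B indicator_def simp flip: ennreal_plus)
    also have "\<dots> = ennreal c * emeasure M (B - A) + (\<integral>\<^sup>+t\<in>B - A. (f t - c) \<partial>M)"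
      using A B_sets f by (subst nn_integral_add) (auto simp: nn_integral_cmult_indicator)
    finally show ?thesis .
  qed
  have "sets \<nu> = sets M" by (simp add: \<nu>_def)
  then show ?thesis
    using A B_sets below above
      split[of M A B] split[of M B A] split[of \<nu> A B] split[of \<nu> B A]
    by (simp add: \<nu> Int_commute distrib_left ac_simps)
qed

lemma superlevel_emeasure_le:
  fixes f :: "'a \<Rightarrow> real"
  assumes "f \<in> borel_measurable M" and B: "B = {t \<in> space M. c \<le> f t}"
  shows "ennreal c * emeasure M B \<le> (\<integral>\<^sup>+t\<in>B. f t \<partial>M)"
proof -
  have "B \<in> sets M" unfolding B using assms(1) by measurable
  then have "ennreal c * emeasure M B = (\<integral>\<^sup>+t\<in>B. c \<partial>M)"
    by (simp add: nn_integral_cmult_indicator)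
  also have "\<dots> \<le> (\<integral>\<^sup>+t\<in>B. f t \<partial>M)"
    by (intro nn_integral_mono) (auto simp: B indicator_def intro: ennreal_leI)
  finally show ?thesis .
qed

lemma superlevel_exchange_tight_imp_null:
  fixes f :: "'a \<Rightarrow> real"
  assumes f: "f \<in> borel_measurable M" and A: "A \<in> sets M" and B: "B = {t \<in> space M. c \<le> f t}"
    and level: "{t \<in> space M. f t = c} \<in> null_sets M"
    and "(\<integral>\<^sup>+t\<in>A - B. (c - f t) \<partial>M) = 0" "(\<integral>\<^sup>+t\<in>B - A. (f t - c) \<partial>M) = 0"
  shows "(A - B) \<union> (B - A) \<in> null_sets M"
proof -
  have B_sets: "B \<in> sets M" unfolding B using f by measurable
  have "A - B \<in> null_sets M"
    by (rule null_set_if_set_nn_integral_eq_0) (use assms B_sets in \<open>auto simp: B\<close>)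
  moreover have "AE t in M. t \<in> B - A \<longrightarrow> 0 < f t - c"
    using AE_not_in[OF level] by eventually_elim (auto simp: B)
  then have "B - A \<in> null_sets M"
    by (rule null_set_if_set_nn_integral_eq_0[rotated 2]) (use assms B_sets in auto)
  ultimately show ?thesis by (rule null_sets.Un)
qed

lemma (in prob_space) exists_superlevel_prob_eq:
  fixes f :: "'a \<Rightarrow> real"
  assumes f: "f \<in> borel_measurable M" and nonneg: "\<And>p. p \<in> space M \<Longrightarrow> 0 \<le> f p"
    and atomless: "\<And>k. prob {p \<in> space M. f p = k} = 0"
    and \<beta>: "0 < \<beta>" "\<beta> < 1"
  shows "\<exists>k>0. prob {p \<in> space M. k \<le> f p} = 1 - \<beta>"
proof -
  define D where "D = distr M borel f"
  interpret D: real_distribution D unfolding D_def using f by simp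
  have D_eq: "measure D X = prob {p \<in> space M. f p \<in> X}" if "X \<in> sets borel" for X
    using f that by (simp add: D_def measure_distr vimage_def Int_def conj_commute)
  have cdf_eq: "cdf D k = prob {p \<in> space M. f p \<le> k}" for k
    by (simp add: cdf_def D_eq)
  have cont: "isCont (cdf D) k" for k
    using atomless[of k] by (simp add: D.isCont_cdf D_eq)
  have "{p \<in> space M. f p \<le> 0} = {p \<in> space M. f p = 0}"
    using nonneg by (auto intro: order.antisym)
  then have cdf_0: "cdf D 0 = 0"
    by (simp add: cdf_eq atomless)
  obtain K where K: "\<beta> \<le> cdf D K"
    using order_tendstoD(1)[OF D.cdf_lim_at_top_prob \<beta>(2)]
    by (auto simp: eventually_at_top_linorder intro: less_imp_le)
  then have "0 \<le> K" using D.cdf_nondecreasing[of K 0] cdf_0 \<beta> by linarith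
  then obtain k where k: "0 \<le> k" "cdf D k = \<beta>"
    using IVT[of "cdf D" 0 \<beta> K] K cdf_0 \<beta> cont by fastforce
  then have "k \<noteq> 0" using cdf_0 \<beta> by auto
  with k have "k > 0" by simp
  have "{p \<in> space M. k \<le> f p} = space M - {p \<in> space M. f p \<le> k} \<union> {p \<in> space M. f p = k}"
    by auto
  moreover have "{p \<in> space M. f p = k} \<in> null_sets M"
    using f atomless[of k] by (auto simp: emeasure_eq_measure intro!: null_setsI)
  ultimately have "prob {p \<in> space M. k \<le> f p} = 1 - cdf D k"
    using f by (simp add: measure_Un_null_set prob_compl cdf_eq)
  then show ?thesis using \<open>k > 0\<close> k by auto
qed

section \<open>Laplace transforms of mixing measures\<close>

lemma norm_exp_minus_one_le: "norm (exp (z::complex) - 1) \<le> norm z * exp (norm z)"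
  using Taylor_exp_field[of z 0] by (simp add: mult.commute)

lemma norm_exp_diff_quotient_le:
  fixes l r a :: real and h z :: complex
  assumes l: "l > 0" and r: "r > 0" and a: "a > 0" and z: "Re z = 2 * r"
    and h: "norm h < r" "h \<noteq> 0"
  shows "norm (of_real (l powr a) * (exp (- (of_real l * (z + h))) - exp (- (of_real l * z))) / h)
         \<le> ((a + 1) / r) powr (a + 1)"
proof -
  have "norm (exp (- (of_real l * h)) - 1) \<le> l * norm h * exp (l * norm h)"
    using norm_exp_minus_one_le[of "- (of_real l * h)"] l by (simp add: norm_mult)
  also have "\<dots> \<le> l * norm h * exp (l * r)"
    using l h by (intro mult_left_mono) auto
  finally have "norm (exp (- (of_real l * h)) - 1) \<le> l * norm h * exp (l * r)" .
  then have "norm (exp (- (of_real l * z)) * (exp (- (of_real l * h)) - 1))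
      \<le> exp (- (l * (2 * r))) * (l * norm h * exp (l * r))"
    using z by (simp add: norm_mult norm_exp_eq_Re)
  moreover have "exp (- (of_real l * (z + h))) - exp (- (of_real l * z))
      = exp (- (of_real l * z)) * (exp (- (of_real l * h)) - 1)"
    by (simp add: algebra_simps flip: exp_add)
  ultimately have "norm (exp (- (of_real l * (z + h))) - exp (- (of_real l * z)))
      \<le> exp (- (l * (2 * r))) * (l * norm h * exp (l * r))"
    by simp
  also have "\<dots> = l * norm h * exp (- (r * l))"
    by (simp add: exp_minus field_simps flip: exp_add)
  finally have diff: "norm (exp (- (of_real l * (z + h))) - exp (- (of_real l * z)))
      \<le> l * norm h * exp (- (r * l))" .
  have "norm (of_real (l powr a) * (exp (- (of_real l * (z + h))) - exp (- (of_real l * z))) / h)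
      = l powr a * norm (exp (- (of_real l * (z + h))) - exp (- (of_real l * z))) / norm h"
    using l by (simp add: norm_mult norm_divide)
  also have "\<dots> \<le> l powr a * (l * norm h * exp (- (r * l))) / norm h"
    using diff by (intro divide_right_mono mult_left_mono) auto
  also have "\<dots> = l powr (a + 1) * exp (- (r * l))"
    using h l by (simp add: powr_add field_simps)
  also have "\<dots> \<le> ((a + 1) / r) powr (a + 1)"
    using l r a by (intro powr_mult_exp_le) auto
  finally show ?thesis .
qed

lemma uncountable_subset_pos_reals_islimpt:
  fixes S :: "real set"
  assumes "S \<subseteq> {0<..}" and "uncountable S"
  shows "\<exists>\<xi>>0. \<xi> islimpt S"
proof (rule ccontr)
  assume no_limpt: "\<not> (\<exists>\<xi>>0. \<xi> islimpt S)"
  define K where "K n = {1 / real (Suc n) .. real (Suc n)}" for n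
  have "0 < z" if "z \<in> K n" for z n
  proof -
    have "0 < 1 / real (Suc n)" by simp
    then show ?thesis using that unfolding K_def atLeastAtMost_iff by linarith
  qed
  then have "finite (K n \<inter> S)" for n
    by (intro finite_not_islimpt_in_compact) (use no_limpt in \<open>auto simp: K_def\<close>)
  moreover have "S \<subseteq> (\<Union>n. K n \<inter> S)"
  proof
    fix t assume t: "t \<in> S"
    then have "t > 0" using assms(1) by auto
    obtain n :: nat where n: "t \<le> real n" "1 / t \<le> real n"
      using real_arch_simple[of "max t (1 / t)"] by auto
    then have "1 / real (Suc n) \<le> t"
      using \<open>t > 0\<close> by (simp add: field_simps)
    with n t show "t \<in> (\<Union>n. K n \<inter> S)" by (auto simp: K_def)
  qed
  ultimately have "countable S"
    by (meson countable_UN countable_finite countable_subset UNIV_I countableI_type)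
  with assms(2) show False by contradiction
qed

lemma integral_dominated_convergence_at:
  fixes s :: "'c::first_countable_topology \<Rightarrow> 'a \<Rightarrow> 'b::{banach, second_countable_topology}"
  assumes "f \<in> borel_measurable M" "\<And>y. s y \<in> borel_measurable M" "integrable M w"
    and lim: "AE x in M. ((\<lambda>y. s y x) \<longlongrightarrow> f x) (at z)"
    and bound: "\<forall>\<^sub>F y in at z. AE x in M. norm (s y x) \<le> w x"
  shows "((\<lambda>y. integral\<^sup>L M (s y)) \<longlongrightarrow> integral\<^sup>L M f) (at z)"
proof (subst tendsto_at_iff_sequentially, intro allI impI)
  fix X :: "nat \<Rightarrow> 'c"
  assume X: "\<forall>i. X i \<in> UNIV - {z}" "X \<longlonglongrightarrow> z"
  then have X_at: "filterlim X (at z) sequentially"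
    by (auto simp: filterlim_at eventually_sequentially)
  from filterlim_iff[THEN iffD1, OF X_at, rule_format, OF bound]
  obtain N where w: "\<And>n. N \<le> n \<Longrightarrow> AE x in M. norm (s (X n) x) \<le> w x"
    by (auto simp: eventually_sequentially)
  show "((\<lambda>y. integral\<^sup>L M (s y)) \<circ> X) \<longlonglongrightarrow> integral\<^sup>L M f"
    unfolding comp_def
  proof (rule LIMSEQ_offset, rule integral_dominated_convergence)
    show "AE x in M. norm (s (X (n + N)) x) \<le> w x" for n
      by (rule w) auto
    show "AE x in M. (\<lambda>n. s (X (n + N)) x) \<longlonglongrightarrow> f x"
      using lim
    proof eventually_elim
      fix x assume "((\<lambda>y. s y x) \<longlongrightarrow> f x) (at z)"
      then show "(\<lambda>n. s (X (n + N)) x) \<longlonglongrightarrow> f x"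
        by (intro LIMSEQ_ignore_initial_segment filterlim_compose[OF _ X_at])
    qed
  qed (use assms in auto)
qed

lemma islimpt_of_real_image:
  assumes "\<xi> islimpt S"
  shows "(of_real \<xi> :: 'a::real_normed_div_algebra) islimpt (of_real ` S)"
  unfolding islimpt_approachable
proof (intro allI impI)
  fix e :: real
  assume "e > 0"
  then obtain x where "x \<in> S" "x \<noteq> \<xi>" "dist x \<xi> < e"
    using assms unfolding islimpt_approachable by blast
  then show "\<exists>x'\<in>of_real ` S. x' \<noteq> (of_real \<xi> :: 'a) \<and> dist x' (of_real \<xi>) < e"
    by (intro bexI[of _ "of_real x"]) (auto simp: dist_of_real)
qed

definition laplace_powr :: "real measure \<Rightarrow> real \<Rightarrow> real \<Rightarrow> real" where
  "laplace_powr M a t = (\<integral>l. (if 0 < l then l powr a * exp (- (l * t)) else 0) \<partial>M)"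

definition laplace_powr_complex :: "real measure \<Rightarrow> real \<Rightarrow> complex \<Rightarrow> complex" where
  "laplace_powr_complex M a z =
     (\<integral>l. (if 0 < l then of_real (l powr a) * exp (- (of_real l * z)) else 0) \<partial>M)"

context finite_borel_measure
begin

declare M_is_borel [measurable_cong]

lemma laplace_powr_complex_of_real:
  "laplace_powr_complex M a (of_real t) = of_real (laplace_powr M a t)"
proof -
  have "laplace_powr_complex M a (of_real t)
      = (\<integral>l. of_real (if 0 < l then l powr a * exp (- (l * t)) else 0) \<partial>M)"
    unfolding laplace_powr_complex_def
    by (intro Bochner_Integration.integral_cong) (auto simp flip: exp_of_real)
  then show ?thesis by (simp add: laplace_powr_def)
qed

lemma laplace_powr_complex_integrable:
  assumes a: "a > 0" and z: "Re z > 0"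
  shows "integrable M (\<lambda>l. if 0 < l then of_real (l powr a) * exp (- (of_real l * z)) else 0)"
proof (rule integrable_const_bound[where B="(a / Re z) powr a"])
  show "AE l in M. norm (if 0 < l then of_real (l powr a) * exp (- (of_real l * z)) else 0)
      \<le> (a / Re z) powr a"
    using powr_mult_exp_le[of _ a "Re z"] a z
    by (intro AE_I2) (auto simp: norm_mult norm_exp_eq_Re mult.commute)
qed measurable

lemma laplace_powr_integrable:
  assumes a: "a > 0" and t: "t > 0"
  shows "integrable M (\<lambda>l. if 0 < l then l powr a * exp (- (l * t)) else 0)"
proof (rule integrable_const_bound[where B="(a / t) powr a"])
  show "AE l in M. norm (if 0 < l then l powr a * exp (- (l * t)) else 0) \<le> (a / t) powr a"
    using powr_mult_exp_le[of _ a t] a t by (intro AE_I2) (auto simp: mult.commute)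
qed measurable

lemma laplace_powr_nonneg: "0 \<le> laplace_powr M a t"
  unfolding laplace_powr_def by (intro Bochner_Integration.integral_nonneg) auto

lemma laplace_powr_le:
  assumes a: "a > 0" and t: "t \<ge> 1"
  shows "laplace_powr M a t \<le> a powr a * measure M (space M)"
proof -
  have "(if 0 < l then l powr a * exp (- (l * t)) else 0) \<le> a powr a" for l
  proof (cases "l > 0")
    case True
    have "l powr a * exp (- (l * t)) \<le> l powr a * exp (- (1 * l))"
      using True t by (intro mult_left_mono) auto
    also have "\<dots> \<le> (a / 1) powr a"
      using True a by (intro powr_mult_exp_le) auto
    finally show ?thesis using True by simp
  qed simp
  then have "laplace_powr M a t \<le> (\<integral>l. a powr a \<partial>M)"
    unfolding laplace_powr_def using laplace_powr_integrable[OF a] t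
    by (intro integral_mono) auto
  then show ?thesis by (simp add: mult.commute)
qed

lemma powr_exp_laplace_powr_tendsto_0:
  assumes a: "a > 0"
  shows "((\<lambda>t. t powr b * exp (- t) * laplace_powr M a t) \<longlongrightarrow> 0) at_top"
proof -
  define C where "C = a powr a * measure M (space M)"
  have "\<forall>\<^sub>F t in at_top. 0 \<le> t powr b * exp (- t) * laplace_powr M a t"
    by (simp add: laplace_powr_nonneg)
  moreover have "\<forall>\<^sub>F t in at_top. t powr b * exp (- t) * laplace_powr M a t \<le> t powr b * exp (- t) * C"
  proof (rule eventually_mono[OF eventually_ge_at_top[of 1]])
    fix t :: real
    assume "1 \<le> t"
    then show "t powr b * exp (- t) * laplace_powr M a t \<le> t powr b * exp (- t) * C"
      unfolding C_def by (intro mult_left_mono laplace_powr_le[OF a]) auto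
  qed
  moreover have "((\<lambda>t::real. t powr b * exp (- t)) \<longlongrightarrow> 0) at_top" by real_asymp
  then have "((\<lambda>t. t powr b * exp (- t) * C) \<longlongrightarrow> 0) at_top"
    by (rule tendsto_mult_left_zero)
  ultimately show ?thesis by (rule tendsto_sandwich[OF _ _ tendsto_const])
qed

lemma laplace_powr_complex_diff_quotient:
  assumes a: "a > 0" and y: "Re y > 0" and z: "Re z > 0"
  shows "(laplace_powr_complex M a y - laplace_powr_complex M a z) / (y - z)
       = (\<integral>l. (if 0 < l then of_real (l powr a) *
            (exp (- (of_real l * y)) - exp (- (of_real l * z))) / (y - z) else 0) \<partial>M)"
proof -
  have "laplace_powr_complex M a y - laplace_powr_complex M a z
      = (\<integral>l. (if 0 < l then of_real (l powr a) *
            (exp (- (of_real l * y)) - exp (- (of_real l * z))) else 0) \<partial>M)"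
    unfolding laplace_powr_complex_def
    by (subst Bochner_Integration.integral_diff[symmetric])
      (auto intro!: Bochner_Integration.integral_cong laplace_powr_complex_integrable a y z
        simp: algebra_simps)
  then have "(laplace_powr_complex M a y - laplace_powr_complex M a z) / (y - z)
      = (\<integral>l. (if 0 < l then of_real (l powr a) *
            (exp (- (of_real l * y)) - exp (- (of_real l * z))) else 0) / (y - z) \<partial>M)"
    by simp
  also have "\<dots> = (\<integral>l. (if 0 < l then of_real (l powr a) *
            (exp (- (of_real l * y)) - exp (- (of_real l * z))) / (y - z) else 0) \<partial>M)"
    by (intro Bochner_Integration.integral_cong) auto
  finally show ?thesis .
qed

lemma laplace_powr_complex_diff_quotient_tendsto:
  assumes a: "a > 0" and z: "Re z > 0"
  shows "((\<lambda>y. \<integral>l. (if 0 < l then of_real (l powr a) *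
            (exp (- (of_real l * y)) - exp (- (of_real l * z))) / (y - z) else 0) \<partial>M)
      \<longlongrightarrow> (\<integral>l. (if 0 < l then - (of_real l * of_real (l powr a) * exp (- (of_real l * z)))
            else 0) \<partial>M)) (at z)"
proof (rule integral_dominated_convergence_at[where w="\<lambda>_. ((a + 1) / (Re z / 2)) powr (a + 1)"])
  show "AE l in M. ((\<lambda>y. if 0 < l then of_real (l powr a) *
        (exp (- (of_real l * y)) - exp (- (of_real l * z))) / (y - z) else 0)
      \<longlongrightarrow> (if 0 < l then - (of_real l * of_real (l powr a) * exp (- (of_real l * z))) else 0)) (at z)"
  proof (intro AE_I2)
    fix l :: real
    have "((\<lambda>y. exp (- (of_real l * y))) has_field_derivative - of_real l * exp (- (of_real l * z)))
        (at z)"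
      by (auto intro!: derivative_eq_intros)
    then have "((\<lambda>y. of_real (l powr a) * ((exp (- (of_real l * y)) - exp (- (of_real l * z))) / (y - z)))
        \<longlongrightarrow> of_real (l powr a) * (- of_real l * exp (- (of_real l * z)))) (at z)"
      unfolding has_field_derivative_iff by (rule tendsto_mult_left)
    then show "((\<lambda>y. if 0 < l then of_real (l powr a) *
          (exp (- (of_real l * y)) - exp (- (of_real l * z))) / (y - z) else 0)
        \<longlongrightarrow> (if 0 < l then - (of_real l * of_real (l powr a) * exp (- (of_real l * z))) else 0)) (at z)"
      by (cases "l > 0") (simp_all add: mult_ac)
  qed
  show "\<forall>\<^sub>F y in at z. AE l in M. norm (if 0 < l then of_real (l powr a) *
        (exp (- (of_real l * y)) - exp (- (of_real l * z))) / (y - z) else 0)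
      \<le> ((a + 1) / (Re z / 2)) powr (a + 1)"
    unfolding eventually_at
  proof (intro exI[of _ "Re z / 2"] conjI ballI impI AE_I2)
    fix y l
    assume "y \<noteq> z \<and> dist y z < Re z / 2"
    then show "norm (if 0 < l then of_real (l powr a) *
          (exp (- (of_real l * y)) - exp (- (of_real l * z))) / (y - z) else 0)
        \<le> ((a + 1) / (Re z / 2)) powr (a + 1)"
      using norm_exp_diff_quotient_le[of l "Re z / 2" a z "y - z"] a z
      by (cases "l > 0") (simp_all add: dist_norm)
  qed (use z in simp)
qed auto

lemma laplace_powr_complex_has_field_derivative:
  assumes a: "a > 0" and z: "Re z > 0"
  shows "(laplace_powr_complex M a has_field_derivative
      (\<integral>l. (if 0 < l then - (of_real l * of_real (l powr a) * exp (- (of_real l * z))) else 0) \<partial>M))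
      (at z)"
proof -
  have "\<forall>\<^sub>F y in at z. (\<integral>l. (if 0 < l then of_real (l powr a) *
            (exp (- (of_real l * y)) - exp (- (of_real l * z))) / (y - z) else 0) \<partial>M)
      = (laplace_powr_complex M a y - laplace_powr_complex M a z) / (y - z)"
    unfolding eventually_at
  proof (intro exI[of _ "Re z"] conjI ballI impI)
    fix y
    assume "y \<noteq> z \<and> dist y z < Re z"
    then have "Re z - Re y < Re z"
      using abs_Re_le_cmod[of "z - y"] by (simp add: dist_norm norm_minus_commute abs_le_iff)
    then show "(\<integral>l. (if 0 < l then of_real (l powr a) *
            (exp (- (of_real l * y)) - exp (- (of_real l * z))) / (y - z) else 0) \<partial>M)
        = (laplace_powr_complex M a y - laplace_powr_complex M a z) / (y - z)"
      using laplace_powr_complex_diff_quotient[OF a _ z] by simp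
  qed (rule z)
  with laplace_powr_complex_diff_quotient_tendsto[OF a z] show ?thesis
    unfolding has_field_derivative_iff by (rule Lim_transform_eventually)
qed

lemma laplace_powr_complex_holomorphic:
  assumes "a > 0"
  shows "laplace_powr_complex M a holomorphic_on {z. Re z > 0}"
  using laplace_powr_complex_has_field_derivative[OF assms]
  by (auto simp: holomorphic_on_def field_differentiable_def intro: has_field_derivative_at_within)

lemma continuous_on_laplace_powr:
  assumes "a > 0"
  shows "continuous_on {0<..} (laplace_powr M a)"
proof -
  have "continuous_on {z. Re z > 0} (laplace_powr_complex M a)"
    using laplace_powr_complex_holomorphic[OF assms] by (rule holomorphic_on_imp_continuous_on)
  then have "continuous_on (of_real ` {0<..}) (laplace_powr_complex M a)"
    by (rule continuous_on_subset) auto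
  then have "continuous_on {0<..} (laplace_powr_complex M a \<circ> of_real)"
    by (intro continuous_on_compose continuous_intros)
  then have "continuous_on {0<..} (\<lambda>t. Re (laplace_powr_complex M a (of_real t)))"
    by (intro continuous_intros) (simp add: o_def)
  then show ?thesis by (simp add: laplace_powr_complex_of_real)
qed

lemma null_sets_powr_exp_laplace_powr_level:
  assumes a: "a > 0" and c: "c \<noteq> 0"
  shows "{t. t > 0 \<and> t powr b * exp (- t) * laplace_powr M a t = c} \<in> null_sets lborel"
proof (rule ccontr)
  define S where "S = {t. t > 0 \<and> t powr b * exp (- t) * laplace_powr M a t = c}"
  assume "S \<notin> null_sets lborel"
  then have "uncountable S" using countable_imp_null_set_lborel by blast
  then obtain \<xi> where \<xi>: "\<xi> > 0" "\<xi> islimpt S"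
    using uncountable_subset_pos_reals_islimpt[of S] by (auto simp: S_def)
  define \<Omega> where "\<Omega> = {z. Re z > 0}"
  define \<psi> where "\<psi> z = z powr of_real b * exp (- z) * laplace_powr_complex M a z - of_real c" for z
  have \<psi>_of_real: "\<psi> (of_real t) = of_real (t powr b * exp (- t) * laplace_powr M a t - c)"
    if "t > 0" for t
    using that by (simp add: \<psi>_def laplace_powr_complex_of_real powr_of_real
        flip: exp_of_real of_real_minus)
  have \<psi>_zero: "\<psi> (of_real t) = 0" if "t > 0" for t
  proof (rule analytic_continuation[of \<psi> \<Omega> "of_real ` S" "of_real \<xi>"])
    have "(\<lambda>z. z powr of_real b) holomorphic_on \<Omega>"
      by (intro holomorphic_intros) (auto simp: \<Omega>_def complex_nonpos_Reals_iff)
    moreover have "(\<lambda>z. exp (- z)) holomorphic_on \<Omega>"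
      by (intro holomorphic_intros)
    moreover have "laplace_powr_complex M a holomorphic_on \<Omega>"
      unfolding \<Omega>_def by (rule laplace_powr_complex_holomorphic[OF a])
    ultimately show "\<psi> holomorphic_on \<Omega>"
      unfolding \<psi>_def by (intro holomorphic_on_diff holomorphic_on_mult holomorphic_on_const)
    show "(of_real \<xi> :: complex) islimpt (of_real ` S)"
      using \<xi>(2) by (rule islimpt_of_real_image)
    show "open \<Omega>" "connected \<Omega>"
      unfolding \<Omega>_def by (auto intro: convex_connected open_halfspace_Re_gt convex_halfspace_Re_gt)
    show "\<psi> z = 0" if "z \<in> of_real ` S" for z
      using that by (auto simp: S_def \<psi>_of_real)
  qed (use that \<xi>(1) in \<open>auto simp: \<Omega>_def S_def\<close>)
  have "\<forall>\<^sub>F t in at_top. t powr b * exp (- t) * laplace_powr M a t = c"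
    using eventually_gt_at_top[of 0]
  proof eventually_elim
    case (elim t)
    show ?case using \<psi>_zero[OF elim] unfolding \<psi>_of_real[OF elim] of_real_eq_0_iff by simp
  qed
  then have "((\<lambda>t. t powr b * exp (- t) * laplace_powr M a t) \<longlongrightarrow> c) at_top"
    by (rule tendsto_eventually)
  with powr_exp_laplace_powr_tendsto_0[OF a] c show False
    using tendsto_unique[OF trivial_limit_at_top_linorder] by blast
qed

end

section \<open>The Poisson-Gamma mixture\<close>

lemma pois_sums: "(\<lambda>x. pois t x) sums 1"
proof -
  have "(\<lambda>n. exp (- t) * (t ^ n /\<^sub>R fact n)) sums (exp (- t) * exp t)"
    by (intro sums_mult exp_converges)
  then show ?thesis by (simp add: pois_def exp_minus divide_inverse mult_ac)
qed

locale poisson_gamma_mixture = real_distribution H for H :: "real measure" +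
  fixes \<kappa> :: real
  assumes kappa_pos: "\<kappa> > 0" and mixing_pos: "measure H {0<..} = 1"
begin

lemma AE_mixing_pos: "AE l in H. l > 0"
  using AE_prob_1[of "{0<..}"] mixing_pos by auto

lemma Gamma_kappa_pos: "Gamma \<kappa> > 0"
  using Gamma_real_pos[OF kappa_pos] .

lemma laplace_powr_pos:
  assumes t: "t > 0"
  shows "laplace_powr H \<kappa> t > 0"
proof (rule ccontr)
  define f where "f l = (if 0 < l then l powr \<kappa> * exp (- (l * t)) else 0)" for l
  assume "\<not> laplace_powr H \<kappa> t > 0"
  then have "integral\<^sup>L H f = 0"
    using laplace_powr_nonneg[of \<kappa> t] unfolding laplace_powr_def f_def[abs_def] by linarith
  then have "AE l in H. f l = 0"
    using integral_nonneg_eq_0_iff_AE[of H f] laplace_powr_integrable[OF kappa_pos t]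
    by (simp add: f_def[abs_def])
  with AE_mixing_pos have "AE l in H. False"
    by eventually_elim (simp add: f_def)
  then show False by simp
qed

lemma gH_eq:
  assumes "t > 0"
  shows "gH \<kappa> H t = t powr (\<kappa> - 1) / Gamma \<kappa> * laplace_powr H \<kappa> t"
proof -
  have "gH \<kappa> H t
      = (\<integral>l. t powr (\<kappa> - 1) / Gamma \<kappa> * (if 0 < l then l powr \<kappa> * exp (- (l * t)) else 0) \<partial>H)"
    unfolding gH_def
  proof (rule integral_cong_AE)
    show "AE l in H. l powr \<kappa> / Gamma \<kappa> * t powr (\<kappa> - 1) * exp (- l * t)
        = t powr (\<kappa> - 1) / Gamma \<kappa> * (if 0 < l then l powr \<kappa> * exp (- (l * t)) else 0)"
      using AE_mixing_pos by eventually_elim auto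
  qed measurable
  then show ?thesis by (simp add: laplace_powr_def)
qed

lemma gH_pos: "t > 0 \<Longrightarrow> gH \<kappa> H t > 0"
  using gH_eq laplace_powr_pos Gamma_kappa_pos by simp

lemma continuous_on_gH: "continuous_on {0<..} (gH \<kappa> H)"
proof -
  have "continuous_on {0<..} (\<lambda>t. t powr (\<kappa> - 1) / Gamma \<kappa> * laplace_powr H \<kappa> t)"
    using Gamma_kappa_pos by (intro continuous_intros continuous_on_laplace_powr kappa_pos) auto
  then show ?thesis by (rule continuous_on_cong[THEN iffD1, rotated 2]) (auto simp: gH_eq)
qed

lemma borel_measurable_gH [measurable]: "gH \<kappa> H \<in> borel_measurable borel"
  unfolding gH_def[abs_def] by measurable

lemma nn_integral_gH_monomial_exp:
  assumes c: "c \<ge> 0"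
  shows "(\<integral>\<^sup>+t. ennreal (if t > 0 then gH \<kappa> H t * t ^ n * exp (- (c * t)) else 0) \<partial>lborel)
       = (\<integral>\<^sup>+l. ennreal (if l > 0 then l powr \<kappa> / Gamma \<kappa> * (Gamma (\<kappa> + n) / (l + c) powr (\<kappa> + n))
            else 0) \<partial>H)"
proof -
  interpret pair_sigma_finite H lborel ..
  define F where "F l t = ennreal (if t > 0 \<and> l > 0 then t powr (\<kappa> - 1) / Gamma \<kappa> * t ^ n
      * exp (- (c * t)) * (l powr \<kappa> * exp (- (l * t))) else 0)" for l t :: real
  have F_meas: "(\<lambda>(l, t). F l t) \<in> borel_measurable (H \<Otimes>\<^sub>M lborel)"
    unfolding F_def by measurable
  have inner_H: "ennreal (if t > 0 then gH \<kappa> H t * t ^ n * exp (- (c * t)) else 0)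
      = (\<integral>\<^sup>+l. F l t \<partial>H)" for t
  proof (cases "t > 0")
    case True
    define A where "A = t powr (\<kappa> - 1) / Gamma \<kappa> * t ^ n * exp (- (c * t))"
    have A: "A \<ge> 0" unfolding A_def using Gamma_kappa_pos True by simp
    have "ennreal (gH \<kappa> H t * t ^ n * exp (- (c * t))) = ennreal A * ennreal (laplace_powr H \<kappa> t)"
      using True A laplace_powr_nonneg by (simp add: gH_eq A_def ennreal_mult'[symmetric] mult_ac)
    also have "ennreal (laplace_powr H \<kappa> t)
        = (\<integral>\<^sup>+l. ennreal (if 0 < l then l powr \<kappa> * exp (- (l * t)) else 0) \<partial>H)"
      unfolding laplace_powr_def
      by (rule nn_integral_eq_integral[symmetric]) (auto intro: laplace_powr_integrable kappa_pos True)
    also have "ennreal A * \<dots> = (\<integral>\<^sup>+l. F l t \<partial>H)"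
      by (subst nn_integral_cmult[symmetric])
        (use True A in \<open>auto intro!: nn_integral_cong simp: F_def A_def ennreal_mult'[symmetric] mult_ac\<close>)
    finally show ?thesis using True by simp
  qed (simp add: F_def)
  have inner_lborel: "(\<integral>\<^sup>+t. F l t \<partial>lborel) = ennreal (if l > 0 then l powr \<kappa> / Gamma \<kappa>
      * (Gamma (\<kappa> + n) / (l + c) powr (\<kappa> + n)) else 0)" for l
  proof (cases "l > 0")
    case True
    have "F l t = ennreal (l powr \<kappa> / Gamma \<kappa>)
        * ennreal (if t > 0 then t powr ((\<kappa> + n) - 1) * exp (- ((l + c) * t)) else 0)" for t
    proof (cases "t > 0")
      case t: True
      have "t powr (\<kappa> + n - 1) = t powr (\<kappa> - 1) * t ^ n"
        using t by (simp add: powr_add[symmetric] powr_realpow[symmetric] algebra_simps)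
      moreover have "exp (- ((l + c) * t)) = exp (- (c * t)) * exp (- (l * t))"
        by (simp add: algebra_simps flip: exp_add)
      ultimately show ?thesis
        using t True Gamma_kappa_pos by (simp add: F_def ennreal_mult'[symmetric] mult_ac)
    qed (simp add: F_def)
    then have "(\<integral>\<^sup>+t. F l t \<partial>lborel) = ennreal (l powr \<kappa> / Gamma \<kappa>)
        * ennreal (Gamma (\<kappa> + n) / (l + c) powr (\<kappa> + n))"
      using True c kappa_pos
      by (simp add: nn_integral_cmult nn_integral_powr_exp_Gamma add_pos_nonneg)
    then show ?thesis using True Gamma_kappa_pos by (simp add: ennreal_mult'[symmetric])
  qed (simp add: F_def)
  have "(\<integral>\<^sup>+t. (\<integral>\<^sup>+l. F l t \<partial>H) \<partial>lborel) = (\<integral>\<^sup>+l. (\<integral>\<^sup>+t. F l t \<partial>lborel) \<partial>H)"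
    using F_meas by (intro Fubini') simp
  then show ?thesis by (simp only: inner_H inner_lborel)
qed

definition negbin :: "nat \<Rightarrow> real \<Rightarrow> real" where
  "negbin x l = Gamma (real x + \<kappa>) / (fact x * Gamma \<kappa>) * (1 / (l + 1)) ^ x * (l / (l + 1)) powr \<kappa>"

lemma fH_eq_integral_negbin: "fH \<kappa> H x = (\<integral>l. negbin x l \<partial>H)"
  unfolding fH_def negbin_def ..

lemma negbin_pos: "l > 0 \<Longrightarrow> negbin x l > 0"
  unfolding negbin_def using Gamma_kappa_pos kappa_pos
  by (auto intro!: mult_pos_pos divide_pos_pos Gamma_real_pos add_pos_nonneg)

lemma negbin_integrable: "integrable H (negbin x)"
proof (rule integrable_const_bound[where B="Gamma (real x + \<kappa>) / (fact x * Gamma \<kappa>)"])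
  show "AE l in H. norm (negbin x l) \<le> Gamma (real x + \<kappa>) / (fact x * Gamma \<kappa>)"
    using AE_mixing_pos
  proof eventually_elim
    case (elim l)
    define C where "C = Gamma (real x + \<kappa>) / (fact x * Gamma \<kappa>)"
    define P where "P = (1 / (l + 1)) ^ x * (l / (l + 1)) powr \<kappa>"
    have "P \<le> 1" "0 \<le> P"
      using elim kappa_pos unfolding P_def by (auto intro!: mult_le_one power_le_one powr_le1)
    moreover have "C > 0"
      unfolding C_def using Gamma_kappa_pos kappa_pos
      by (auto intro!: divide_pos_pos Gamma_real_pos add_pos_nonneg)
    moreover have "negbin x l = C * P" by (simp add: negbin_def C_def P_def)
    ultimately show ?case unfolding C_def[symmetric] by (simp add: abs_mult mult_left_le)
  qed
  show "negbin x \<in> borel_measurable H" unfolding negbin_def[abs_def] by measurable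
qed

lemma fH_pos: "fH \<kappa> H x > 0"
proof (rule ccontr)
  have nonneg: "AE l in H. 0 \<le> negbin x l"
    using AE_mixing_pos by eventually_elim (simp add: negbin_pos less_imp_le)
  assume "\<not> fH \<kappa> H x > 0"
  moreover have "fH \<kappa> H x \<ge> 0"
    unfolding fH_eq_integral_negbin by (rule integral_nonneg_AE[OF nonneg])
  ultimately have "AE l in H. negbin x l = 0"
    using integral_nonneg_eq_0_iff_AE[OF negbin_integrable nonneg]
    by (simp add: fH_eq_integral_negbin)
  with AE_mixing_pos have "AE l in H. False"
    by eventually_elim (simp add: negbin_pos less_imp_neq[symmetric])
  then show False by simp
qed

definition joint_density :: "nat \<Rightarrow> real \<Rightarrow> real" where
  "joint_density x t = (if t > 0 then gH \<kappa> H t * pois t x else 0)"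

lemma joint_density_nonneg: "joint_density x t \<ge> 0"
  using gH_pos by (auto simp: joint_density_def pois_def intro!: mult_nonneg_nonneg less_imp_le)

lemma joint_density_pos: "t > 0 \<Longrightarrow> joint_density x t > 0"
  using gH_pos by (simp add: joint_density_def pois_def)

lemma borel_measurable_joint_density [measurable]: "joint_density x \<in> borel_measurable borel"
  unfolding joint_density_def[abs_def] pois_def by measurable

lemma nn_integral_joint_density: "(\<integral>\<^sup>+t. joint_density x t \<partial>lborel) = fH \<kappa> H x"
proof -
  have "(\<integral>\<^sup>+t. joint_density x t \<partial>lborel)
      = (\<integral>\<^sup>+t. ennreal (1 / fact x) * ennreal (if t > 0 then gH \<kappa> H t * t ^ x * exp (- (1 * t)) else 0)
          \<partial>lborel)"
    using gH_pos
    by (intro nn_integral_cong) (auto simp: joint_density_def pois_def ennreal_mult'[symmetric] mult_ac)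
  also have "\<dots> = (\<integral>\<^sup>+l. ennreal (1 / fact x) * ennreal (if l > 0 then l powr \<kappa> / Gamma \<kappa>
      * (Gamma (\<kappa> + x) / (l + 1) powr (\<kappa> + x)) else 0) \<partial>H)"
    by (simp add: nn_integral_cmult nn_integral_gH_monomial_exp)
  also have "\<dots> = (\<integral>\<^sup>+l. negbin x l \<partial>H)"
  proof (rule nn_integral_cong_AE)
    show "AE l in H. ennreal (1 / fact x) * ennreal (if l > 0 then l powr \<kappa> / Gamma \<kappa>
        * (Gamma (\<kappa> + x) / (l + 1) powr (\<kappa> + x)) else 0) = ennreal (negbin x l)"
      using AE_mixing_pos
    proof eventually_elim
      case (elim l)
      have "(1 / (l + 1)) ^ x = 1 / (l + 1) powr real x"
        using elim by (simp add: powr_realpow power_one_over)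
      moreover have "(l / (l + 1)) powr \<kappa> = l powr \<kappa> / (l + 1) powr \<kappa>"
        using elim by (simp add: powr_divide)
      moreover have "(l + 1) powr (\<kappa> + real x) = (l + 1) powr \<kappa> * (l + 1) powr real x"
        by (simp add: powr_add)
      ultimately have "negbin x l
          = 1 / fact x * (l powr \<kappa> / Gamma \<kappa> * (Gamma (\<kappa> + x) / (l + 1) powr (\<kappa> + x)))"
        unfolding negbin_def using elim Gamma_kappa_pos by (simp add: field_simps add.commute)
      then show ?case
        using elim Gamma_kappa_pos kappa_pos
        by (simp add: ennreal_mult'[symmetric] Gamma_real_pos add_pos_nonneg)
    qed
  qed
  also have "\<dots> = fH \<kappa> H x"
    unfolding fH_eq_integral_negbin
    by (rule nn_integral_eq_integral[OF negbin_integrable])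
       (use AE_mixing_pos in \<open>eventually_elim, simp add: negbin_pos less_imp_le\<close>)
  finally show ?thesis .
qed

lemma suminf_nn_integral_joint_density: "(\<Sum>x. \<integral>\<^sup>+t. joint_density x t \<partial>lborel) = 1"
proof -
  have "(\<Sum>x. ennreal (joint_density x t)) = ennreal (if t > 0 then gH \<kappa> H t * t ^ 0 * exp (- (0 * t)) else 0)"
    for t
  proof (cases "t > 0")
    case True
    have "(\<lambda>x. joint_density x t) sums (gH \<kappa> H t * 1)"
      using True sums_mult[OF pois_sums, of "gH \<kappa> H t"] by (simp add: joint_density_def)
    then have "(\<Sum>x. joint_density x t) = gH \<kappa> H t" by (simp add: sums_iff)
    with \<open>(\<lambda>x. joint_density x t) sums (gH \<kappa> H t * 1)\<close> show ?thesis
      using True by (simp add: suminf_ennreal_eq joint_density_nonneg)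
  qed (simp add: joint_density_def)
  then have "(\<Sum>x. \<integral>\<^sup>+t. joint_density x t \<partial>lborel)
      = (\<integral>\<^sup>+t. ennreal (if t > 0 then gH \<kappa> H t * t ^ 0 * exp (- (0 * t)) else 0) \<partial>lborel)"
    by (simp add: nn_integral_suminf[symmetric])
  also have "\<dots> = (\<integral>\<^sup>+l. ennreal (if 0 < l then 1 else 0) \<partial>H)"
    using Gamma_kappa_pos by (subst nn_integral_gH_monomial_exp) (auto intro!: nn_integral_cong)
  also have "\<dots> = (\<integral>\<^sup>+l. indicator {0<..} l \<partial>H)"
    by (intro nn_integral_cong) (simp add: indicator_def)
  also have "\<dots> = 1"
    using mixing_pos by (simp add: emeasure_eq_measure)
  finally show ?thesis .
qed

lemma jointH_eq_density:
  "jointH \<kappa> H = density (lborel \<Otimes>\<^sub>M count_space UNIV) (\<lambda>p. joint_density (snd p) (fst p))"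
  unfolding jointH_def joint_density_def by (simp add: case_prod_beta')

lemma sets_jointH [measurable_cong]: "sets (jointH \<kappa> H) = sets (lborel \<Otimes>\<^sub>M count_space UNIV)"
  by (simp add: jointH_eq_density)

lemma nn_integral_jointH:
  fixes f :: "real \<times> nat \<Rightarrow> ennreal"
  assumes "f \<in> borel_measurable (lborel \<Otimes>\<^sub>M count_space UNIV)"
  shows "(\<integral>\<^sup>+p. f p \<partial>jointH \<kappa> H) = (\<Sum>x. \<integral>\<^sup>+t. joint_density x t * f (t, x) \<partial>lborel)"
proof -
  have "(\<lambda>p. ennreal (joint_density (snd p) (fst p))) \<in> borel_measurable (lborel \<Otimes>\<^sub>M count_space UNIV)"
    by (intro measurable_pair_count_space_nat measurable_compose[OF _ measurable_ennreal]) simp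
  with assms show ?thesis
    unfolding jointH_eq_density
    by (simp add: nn_integral_density nn_integral_pair_count_space_nat lborel.sigma_finite_measure_axioms)
qed

lemma emeasure_jointH:
  assumes "\<And>x. A x \<in> sets lborel"
  shows "emeasure (jointH \<kappa> H) {(t, x). t \<in> A x} = (\<Sum>x. \<integral>\<^sup>+t\<in>A x. joint_density x t \<partial>lborel)"
proof -
  have A: "{(t, x). t \<in> A x} \<in> sets (lborel \<Otimes>\<^sub>M count_space UNIV)"
    using assms by (rule sets_pair_count_space_nat)
  have "emeasure (jointH \<kappa> H) {(t, x). t \<in> A x}
      = (\<integral>\<^sup>+p. indicator {(t, x). t \<in> A x} p \<partial>jointH \<kappa> H)"
    by (rule nn_integral_indicator[symmetric]) (use A in \<open>simp add: sets_jointH\<close>)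
  also have "\<dots> = (\<Sum>x. \<integral>\<^sup>+t. ennreal (joint_density x t) * indicator {(t, x). t \<in> A x} (t, x) \<partial>lborel)"
    using A by (intro nn_integral_jointH) simp
  also have "\<dots> = (\<Sum>x. \<integral>\<^sup>+t\<in>A x. joint_density x t \<partial>lborel)"
    by (simp add: indicator_def)
  finally show ?thesis .
qed

lemma prob_space_jointH: "prob_space (jointH \<kappa> H)"
proof
  have "space (jointH \<kappa> H) = {(t, x). t \<in> UNIV}"
    by (simp add: jointH_eq_density space_pair_measure)
  then show "emeasure (jointH \<kappa> H) (space (jointH \<kappa> H)) = 1"
    using emeasure_jointH[of "\<lambda>_. UNIV"] by (simp add: suminf_nn_integral_joint_density)
qed

lemma exp_length_eq: "exp_length \<kappa> H I = (\<Sum>x. emeasure lborel (I x) * fH \<kappa> H x)"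
proof -
  have meas: "(\<lambda>p. emeasure lborel (I (snd p))) \<in> borel_measurable (lborel \<Otimes>\<^sub>M count_space UNIV)"
    by (rule measurable_pair_count_space_nat[where g="\<lambda>x t. emeasure lborel (I x)"]) simp
  have "exp_length \<kappa> H I = (\<Sum>x. \<integral>\<^sup>+t. joint_density x t * emeasure lborel (I x) \<partial>lborel)"
    unfolding exp_length_def case_prod_beta' by (simp add: nn_integral_jointH[OF meas])
  then show ?thesis
    by (simp add: nn_integral_multc nn_integral_joint_density) (simp add: mult.commute)
qed

lemma postH_eq: "t > 0 \<Longrightarrow> postH \<kappa> H x t = joint_density x t / fH \<kappa> H x"
  by (simp add: postH_def joint_density_def mult.commute)

lemma postH_nonpos: "\<not> t > 0 \<Longrightarrow> postH \<kappa> H x t = 0"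
  by (simp add: postH_def)

lemma postH_pos: "t > 0 \<Longrightarrow> postH \<kappa> H x t > 0"
  using joint_density_pos fH_pos by (simp add: postH_eq)

lemma postH_nonneg: "postH \<kappa> H x t \<ge> 0"
  using postH_pos[of t x] postH_nonpos[of t x] by (cases "t > 0") auto

lemma borel_measurable_postH [measurable]: "postH \<kappa> H x \<in> borel_measurable borel"
  unfolding postH_def[abs_def] pois_def by measurable

lemma continuous_on_postH: "continuous_on {0<..} (postH \<kappa> H x)"
proof -
  have "continuous_on {0<..} (\<lambda>t. gH \<kappa> H t * pois t x / fH \<kappa> H x)"
    using fH_pos[of x]
    by (intro continuous_intros continuous_on_gH) (auto simp: pois_def intro!: continuous_intros)
  then show ?thesis
    by (rule continuous_on_cong[THEN iffD1, rotated 2]) (auto simp: postH_def mult.commute)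
qed

lemma postH_eq_laplace_powr:
  assumes "t > 0"
  shows "postH \<kappa> H x t
       = t powr (real x + \<kappa> - 1) * exp (- t) * laplace_powr H \<kappa> t / (Gamma \<kappa> * fact x * fH \<kappa> H x)"
proof -
  have "t powr (real x + \<kappa> - 1) = t ^ x * t powr (\<kappa> - 1)"
    using assms by (simp add: powr_add[symmetric] powr_realpow[symmetric] algebra_simps)
  then show ?thesis
    using assms by (simp add: postH_eq joint_density_def gH_eq pois_def)
qed

lemma postH_tendsto_0: "(postH \<kappa> H x \<longlongrightarrow> 0) at_top"
proof -
  have "((\<lambda>t. t powr (real x + \<kappa> - 1) * exp (- t) * laplace_powr H \<kappa> t
      / (Gamma \<kappa> * fact x * fH \<kappa> H x)) \<longlongrightarrow> 0) at_top"
    by (intro tendsto_divide_zero powr_exp_laplace_powr_tendsto_0 kappa_pos)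
  moreover have "\<forall>\<^sub>F t in at_top. t powr (real x + \<kappa> - 1) * exp (- t) * laplace_powr H \<kappa> t
      / (Gamma \<kappa> * fact x * fH \<kappa> H x) = postH \<kappa> H x t"
    using eventually_gt_at_top[of 0] by eventually_elim (simp add: postH_eq_laplace_powr)
  ultimately show ?thesis by (simp add: tendsto_cong)
qed

lemma null_sets_postH_level:
  assumes "k \<noteq> 0"
  shows "{t. postH \<kappa> H x t = k} \<in> null_sets lborel"
proof -
  define C where "C = Gamma \<kappa> * fact x * fH \<kappa> H x"
  have C: "C > 0" unfolding C_def using Gamma_kappa_pos fH_pos by simp
  have "postH \<kappa> H x t = k
      \<longleftrightarrow> t > 0 \<and> t powr (real x + \<kappa> - 1) * exp (- t) * laplace_powr H \<kappa> t = k * C" for t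
  proof (cases "t > 0")
    case True
    then show ?thesis
      using C unfolding postH_eq_laplace_powr[OF True] C_def[symmetric] by (simp add: divide_eq_eq)
  qed (use assms postH_nonpos in auto)
  then have "{t. postH \<kappa> H x t = k}
      = {t. t > 0 \<and> t powr (real x + \<kappa> - 1) * exp (- t) * laplace_powr H \<kappa> t = k * C}"
    by blast
  moreover have "k * C \<noteq> 0" using assms C by simp
  ultimately show ?thesis
    by (simp add: null_sets_powr_exp_laplace_powr_level kappa_pos)
qed

lemma null_sets_joint_density_level:
  assumes "c > 0"
  shows "{t. joint_density x t = c} \<in> null_sets lborel"
proof -
  have "{t. joint_density x t = c} = {t. postH \<kappa> H x t = c / fH \<kappa> H x}"
    using assms fH_pos[of x] postH_nonpos[of _ x]
    by (force simp: postH_eq joint_density_def field_simps)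
  then show ?thesis
    using assms fH_pos[of x] by (simp add: null_sets_postH_level)
qed

lemma set_nn_integral_postH_level:
  "(\<integral>\<^sup>+t\<in>{t. postH \<kappa> H x t = k}. joint_density x t \<partial>lborel) = 0"
proof (cases "k = 0")
  case True
  then have zero: "ennreal (joint_density x t) * indicator {t. postH \<kappa> H x t = k} t = 0" for t
    using postH_pos[of t x] by (cases "t > 0") (auto simp: joint_density_def)
  show ?thesis by (simp only: zero) simp
next
  case False
  then have "AE t in lborel. t \<notin> {t. postH \<kappa> H x t = k}"
    by (intro AE_not_in null_sets_postH_level)
  then show ?thesis
    by (subst nn_integral_0_iff_AE) (auto elim!: AE_mp)
qed

lemma set_nn_integral_joint_density_open_pos:
  assumes "open U" "U \<noteq> {}" "U \<subseteq> {0<..}"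
  shows "(\<integral>\<^sup>+t\<in>U. joint_density x t \<partial>lborel) > 0"
proof (rule ccontr)
  assume "\<not> ?thesis"
  then have "U \<in> null_sets lborel"
    using assms joint_density_pos
    by (intro null_set_if_set_nn_integral_eq_0[of _ _ "joint_density x"]) (auto simp: subset_eq)
  then have "negligible U"
    by (simp add: negligible_iff_null_sets null_sets_completionI)
  with open_not_negligible assms(1,2) show False by blast
qed

lemma postH_attains:
  assumes "0 < v" "v \<le> postH \<kappa> H x t0"
  shows "\<exists>t\<ge>t0. postH \<kappa> H x t = v"
proof -
  have "t0 > 0" using assms postH_nonpos[of t0 x] by force
  obtain t1 where t1: "t1 \<ge> t0" "postH \<kappa> H x t1 < v"
    using order_tendstoD(2)[OF postH_tendsto_0 \<open>0 < v\<close>] eventually_ge_at_top[of t0]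
    by (metis (mono_tags, lifting) eventually_at_top_linorder order_refl eventually_conj)
  have "continuous_on {t0..t1} (postH \<kappa> H x)"
    by (rule continuous_on_subset[OF continuous_on_postH]) (use \<open>t0 > 0\<close> in auto)
  then show ?thesis
    using IVT2'[of "postH \<kappa> H x" t1 v t0] t1 assms(2) by force
qed

lemma hpd_rule_eq_postH_superlevel:
  assumes "k > 0"
  shows "hpd_rule \<kappa> H k x = {t. k \<le> postH \<kappa> H x t}"
proof -
  have "0 \<le> t" if "k \<le> postH \<kappa> H x t" for t
    using that assms postH_nonpos[of t x] by (cases "t > 0") auto
  then show ?thesis by (auto simp: hpd_rule_def)
qed

lemma hpd_rule_eq_joint_density_superlevel:
  assumes "k > 0"
  shows "hpd_rule \<kappa> H k x = {t. k * fH \<kappa> H x \<le> joint_density x t}"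
proof -
  have "k \<le> postH \<kappa> H x t \<longleftrightarrow> k * fH \<kappa> H x \<le> joint_density x t" for t
    using assms fH_pos[of x] postH_nonpos[of t x]
    by (cases "t > 0") (auto simp: postH_eq pos_le_divide_eq joint_density_def mult_le_0_iff)
  then show ?thesis by (simp add: hpd_rule_eq_postH_superlevel[OF assms])
qed

lemma sets_hpd_rule [measurable]: "hpd_rule \<kappa> H k x \<in> sets borel"
  unfolding hpd_rule_def by measurable

lemma coverage_eq:
  assumes "\<And>x. I x \<in> sets borel"
  shows "ennreal (coverage \<kappa> H I) = (\<Sum>x. \<integral>\<^sup>+t\<in>I x. joint_density x t \<partial>lborel)"
proof -
  interpret J: prob_space "jointH \<kappa> H" by (rule prob_space_jointH)
  show ?thesis
    using assms by (simp add: coverage_def J.emeasure_eq_measure[symmetric] emeasure_jointH)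
qed

lemma coverage_hpd_rule_0: "coverage \<kappa> H (hpd_rule \<kappa> H 0) = 1"
proof -
  have "ennreal (joint_density x t) * indicator (hpd_rule \<kappa> H 0 x) t = joint_density x t" for x t
    using postH_nonneg[of x t] by (auto simp: hpd_rule_def indicator_def joint_density_def)
  then have "ennreal (coverage \<kappa> H (hpd_rule \<kappa> H 0)) = 1"
    by (simp add: coverage_eq suminf_nn_integral_joint_density)
  then show ?thesis by simp
qed

lemma coverage_hpd_rule:
  assumes "k > 0"
  shows "coverage \<kappa> H (hpd_rule \<kappa> H k)
       = measure (jointH \<kappa> H) {p \<in> space (jointH \<kappa> H). k \<le> postH \<kappa> H (snd p) (fst p)}"
  unfolding coverage_def hpd_rule_eq_postH_superlevel[OF assms]
  by (rule arg_cong[where f="measure (jointH \<kappa> H)"]) (auto simp: jointH_eq_density space_pair_measure)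

lemma exists_hpd_level:
  assumes "0 < \<beta>" "\<beta> < 1"
  shows "\<exists>k>0. coverage \<kappa> H (hpd_rule \<kappa> H k) = 1 - \<beta>"
proof -
  interpret J: prob_space "jointH \<kappa> H" by (rule prob_space_jointH)
  have "\<exists>k>0. J.prob {p \<in> space (jointH \<kappa> H). k \<le> postH \<kappa> H (snd p) (fst p)} = 1 - \<beta>"
  proof (rule J.exists_superlevel_prob_eq)
    show "(\<lambda>p. postH \<kappa> H (snd p) (fst p)) \<in> borel_measurable (jointH \<kappa> H)"
      by (simp add: measurable_pair_count_space_nat)
    show "J.prob {p \<in> space (jointH \<kappa> H). postH \<kappa> H (snd p) (fst p) = k} = 0" for k
    proof -
      have "{p \<in> space (jointH \<kappa> H). postH \<kappa> H (snd p) (fst p) = k}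
          = {(t, x). t \<in> {t. postH \<kappa> H x t = k}}"
        by (auto simp: jointH_eq_density space_pair_measure)
      moreover have "emeasure (jointH \<kappa> H) {(t, x). t \<in> {t. postH \<kappa> H x t = k}} = 0"
        by (subst emeasure_jointH) (measurable, simp add: set_nn_integral_postH_level)
      ultimately show ?thesis by (simp add: J.emeasure_eq_measure)
    qed
  qed (use assms postH_nonneg in auto)
  then show ?thesis using coverage_hpd_rule by auto
qed

lemma set_nn_integral_between_levels_pos:
  assumes k: "0 < k1" "k1 < k2" and t0: "k2 \<le> postH \<kappa> H x t0"
  shows "0 < (\<integral>\<^sup>+t\<in>hpd_rule \<kappa> H k1 x - hpd_rule \<kappa> H k2 x. joint_density x t \<partial>lborel)"
proof -
  obtain t' where t': "postH \<kappa> H x t' = (k1 + k2) / 2"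
    using postH_attains[of "(k1 + k2) / 2" x t0] k t0 by auto
  define U where "U = {0<..} \<inter> postH \<kappa> H x -` {k1<..<k2}"
  have "open U"
    unfolding U_def by (rule continuous_open_preimage[OF continuous_on_postH]) auto
  moreover have "t' \<in> U"
    using t' k postH_nonpos[of t' x] by (cases "t' > 0") (auto simp: U_def)
  moreover have U: "U \<subseteq> hpd_rule \<kappa> H k1 x - hpd_rule \<kappa> H k2 x"
    using k by (auto simp: U_def hpd_rule_eq_postH_superlevel)
  ultimately have "0 < (\<integral>\<^sup>+t\<in>U. joint_density x t \<partial>lborel)"
    by (intro set_nn_integral_joint_density_open_pos) (auto simp: U_def)
  also have "\<dots> \<le> (\<integral>\<^sup>+t\<in>hpd_rule \<kappa> H k1 x - hpd_rule \<kappa> H k2 x. joint_density x t \<partial>lborel)"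
    using U by (intro nn_integral_mono) (auto simp: indicator_def)
  finally show ?thesis .
qed

lemma coverage_hpd_rule_strict_mono:
  assumes k: "0 < k1" "k1 < k2" and pos: "coverage \<kappa> H (hpd_rule \<kappa> H k2) > 0"
  shows "coverage \<kappa> H (hpd_rule \<kappa> H k2) < coverage \<kappa> H (hpd_rule \<kappa> H k1)"
proof -
  define D where "D x = hpd_rule \<kappa> H k1 x - hpd_rule \<kappa> H k2 x" for x
  have "{(t, x). t \<in> hpd_rule \<kappa> H k2 x} \<noteq> {}"
    using pos unfolding coverage_def by (metis measure_empty order_less_irrefl)
  then obtain x t0 where "k2 \<le> postH \<kappa> H x t0"
    using k by (auto simp: hpd_rule_eq_postH_superlevel)
  then have "0 < (\<integral>\<^sup>+t\<in>D x. joint_density x t \<partial>lborel)"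
    unfolding D_def using k by (rule set_nn_integral_between_levels_pos[rotated 2])
  also have "\<dots> \<le> (\<Sum>x. \<integral>\<^sup>+t\<in>D x. joint_density x t \<partial>lborel)"
    using sum_le_suminf[of "\<lambda>x. \<integral>\<^sup>+t\<in>D x. joint_density x t \<partial>lborel" "{x}"] by simp
  finally have sum_pos: "0 < (\<Sum>x. \<integral>\<^sup>+t\<in>D x. joint_density x t \<partial>lborel)" .
  have "(\<integral>\<^sup>+t\<in>hpd_rule \<kappa> H k1 x. joint_density x t \<partial>lborel)
      = (\<integral>\<^sup>+t\<in>hpd_rule \<kappa> H k2 x. joint_density x t \<partial>lborel)
        + (\<integral>\<^sup>+t\<in>D x. joint_density x t \<partial>lborel)" for x
  proof -
    have "hpd_rule \<kappa> H k2 x \<subseteq> hpd_rule \<kappa> H k1 x"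
      using k by (auto simp: hpd_rule_def)
    then show ?thesis
      by (subst nn_integral_add[symmetric])
        (auto intro!: nn_integral_cong simp: D_def indicator_def)
  qed
  then have "ennreal (coverage \<kappa> H (hpd_rule \<kappa> H k1))
      = ennreal (coverage \<kappa> H (hpd_rule \<kappa> H k2)) + (\<Sum>x. \<integral>\<^sup>+t\<in>D x. joint_density x t \<partial>lborel)"
    by (simp add: coverage_eq suminf_add)
  moreover have "ennreal (coverage \<kappa> H (hpd_rule \<kappa> H k2)) + 0
      < ennreal (coverage \<kappa> H (hpd_rule \<kappa> H k2)) + (\<Sum>x. \<integral>\<^sup>+t\<in>D x. joint_density x t \<partial>lborel)"
    using sum_pos by (simp only: ennreal_add_left_cancel_less) simp
  ultimately have "ennreal (coverage \<kappa> H (hpd_rule \<kappa> H k2)) < ennreal (coverage \<kappa> H (hpd_rule \<kappa> H k1))"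
    by simp
  then show ?thesis by (simp add: ennreal_less_iff coverage_def)
qed

lemma hpd_level_unique:
  assumes "0 \<le> k1" "coverage \<kappa> H (hpd_rule \<kappa> H k1) = 1 - \<beta>"
    and "0 \<le> k2" "coverage \<kappa> H (hpd_rule \<kappa> H k2) = 1 - \<beta>"
    and "0 < \<beta>" "\<beta> < 1"
  shows "k1 = k2"
proof -
  have "k \<noteq> 0" if "coverage \<kappa> H (hpd_rule \<kappa> H k) = 1 - \<beta>" for k
    using that coverage_hpd_rule_0 assms(5) by auto
  then have pos: "0 < k1" "0 < k2" using assms by force+
  show ?thesis
  proof (rule linorder_cases[of k1 k2])
    assume "k1 < k2"
    then show ?thesis
      using coverage_hpd_rule_strict_mono[OF pos(1)] assms by fastforce
  next
    assume "k2 < k1"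
    then show ?thesis
      using coverage_hpd_rule_strict_mono[OF pos(2)] assms by fastforce
  qed
qed

lemma ennreal_mult_exp_length:
  assumes "k \<ge> 0"
  shows "ennreal k * exp_length \<kappa> H I = (\<Sum>x. ennreal (k * fH \<kappa> H x) * emeasure lborel (I x))"
proof -
  have "ennreal (k * fH \<kappa> H x) * emeasure lborel (I x)
      = ennreal k * (emeasure lborel (I x) * ennreal (fH \<kappa> H x))" for x
    using assms fH_pos[of x] by (simp add: ennreal_mult mult_ac)
  then show ?thesis by (simp add: exp_length_eq ennreal_suminf_cmult)
qed

definition hpd_slack :: "real \<Rightarrow> (nat \<Rightarrow> real set) \<Rightarrow> nat \<Rightarrow> ennreal" where
  "hpd_slack k I x =
     (\<integral>\<^sup>+t\<in>I x - hpd_rule \<kappa> H k x. (k * fH \<kappa> H x - joint_density x t) \<partial>lborel)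
     + (\<integral>\<^sup>+t\<in>hpd_rule \<kappa> H k x - I x. (joint_density x t - k * fH \<kappa> H x) \<partial>lborel)"

lemma hpd_exchange:
  assumes k: "k > 0" and I: "\<And>x. I x \<in> sets borel"
  shows "ennreal k * exp_length \<kappa> H I + coverage \<kappa> H (hpd_rule \<kappa> H k)
       = ennreal k * exp_length \<kappa> H (hpd_rule \<kappa> H k) + coverage \<kappa> H I + (\<Sum>x. hpd_slack k I x)"
proof -
  have "ennreal (k * fH \<kappa> H x) * emeasure lborel (I x)
        + (\<integral>\<^sup>+t\<in>hpd_rule \<kappa> H k x. joint_density x t \<partial>lborel)
      = ennreal (k * fH \<kappa> H x) * emeasure lborel (hpd_rule \<kappa> H k x)
        + ((\<integral>\<^sup>+t\<in>I x. joint_density x t \<partial>lborel) + hpd_slack k I x)" for x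
    unfolding hpd_slack_def using k fH_pos[of x] I[of x] joint_density_nonneg
    by (subst superlevel_exchange[where B="hpd_rule \<kappa> H k x"])
      (auto simp: hpd_rule_eq_joint_density_superlevel add.assoc)
  then have "(\<Sum>x. ennreal (k * fH \<kappa> H x) * emeasure lborel (I x)
        + (\<integral>\<^sup>+t\<in>hpd_rule \<kappa> H k x. joint_density x t \<partial>lborel))
      = (\<Sum>x. ennreal (k * fH \<kappa> H x) * emeasure lborel (hpd_rule \<kappa> H k x)
        + ((\<integral>\<^sup>+t\<in>I x. joint_density x t \<partial>lborel) + hpd_slack k I x))"
    by simp
  then show ?thesis
    using k I
    by (simp add: ennreal_mult_exp_length coverage_eq suminf_add[symmetric] summableI add.assoc)
qed

lemma exp_length_hpd_rule_le_coverage: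
  assumes "k > 0"
  shows "ennreal k * exp_length \<kappa> H (hpd_rule \<kappa> H k) \<le> coverage \<kappa> H (hpd_rule \<kappa> H k)"
  using assms
  by (auto simp: ennreal_mult_exp_length coverage_eq hpd_rule_eq_joint_density_superlevel
      intro!: suminf_le superlevel_emeasure_le)

lemma hpd_slack_eq_0_imp_null:
  assumes k: "k > 0" and "I x \<in> sets borel" and "hpd_slack k I x = 0"
  shows "(I x - hpd_rule \<kappa> H k x) \<union> (hpd_rule \<kappa> H k x - I x) \<in> null_sets lborel"
  using assms fH_pos[of x] null_sets_joint_density_level[of "k * fH \<kappa> H x" x]
  by (intro superlevel_exchange_tight_imp_null[where f="joint_density x"])
    (auto simp: hpd_slack_def hpd_rule_eq_joint_density_superlevel)

lemma hpd_rule_optimal: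
  assumes k: "k > 0" and I: "meas_rule I"
    and cov: "coverage \<kappa> H (hpd_rule \<kappa> H k) \<le> coverage \<kappa> H I"
  shows "exp_length \<kappa> H (hpd_rule \<kappa> H k) \<le> exp_length \<kappa> H I"
    and "exp_length \<kappa> H I = exp_length \<kappa> H (hpd_rule \<kappa> H k) \<Longrightarrow>
           emeasure lborel ((I x - hpd_rule \<kappa> H k x) \<union> (hpd_rule \<kappa> H k x - I x)) = 0"
proof -
  have I_sets: "I x \<in> sets borel" for x using I by (simp add: meas_rule_def)
  define CB where "CB = ennreal (coverage \<kappa> H (hpd_rule \<kappa> H k))"
  define EB where "EB = ennreal k * exp_length \<kappa> H (hpd_rule \<kappa> H k)"
  have exchange: "ennreal k * exp_length \<kappa> H I + CB = EB + coverage \<kappa> H I + (\<Sum>x. hpd_slack k I x)"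
    unfolding CB_def EB_def using hpd_exchange[OF k I_sets] .
  have "CB + EB \<le> EB + coverage \<kappa> H I + (\<Sum>x. hpd_slack k I x)"
    using cov by (simp add: CB_def add.commute add_increasing2 add_right_mono ennreal_leI)
  also have "\<dots> = CB + ennreal k * exp_length \<kappa> H I"
    using exchange by (simp add: add.commute)
  finally show "exp_length \<kappa> H (hpd_rule \<kappa> H k) \<le> exp_length \<kappa> H I"
    using k by (simp add: CB_def EB_def ennreal_add_left_cancel_le ennreal_mult_le_mult_iff)
  assume eq: "exp_length \<kappa> H I = exp_length \<kappa> H (hpd_rule \<kappa> H k)"
  have "EB + CB + (\<Sum>x. hpd_slack k I x) \<le> EB + coverage \<kappa> H I + (\<Sum>x. hpd_slack k I x)"
    using cov by (simp add: CB_def add_left_mono add_right_mono ennreal_leI)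
  also have "\<dots> = EB + CB + 0"
    using exchange[unfolded eq, folded EB_def] by (metis add.commute add_0_right)
  finally have "EB + CB + (\<Sum>x. hpd_slack k I x) \<le> EB + CB + 0" .
  moreover have "EB + CB \<noteq> \<infinity>"
    using exp_length_hpd_rule_le_coverage[OF k] by (auto simp: EB_def CB_def top_unique)
  ultimately have "(\<Sum>x. hpd_slack k I x) = 0"
    by (simp only: ennreal_add_left_cancel_le) simp
  then show "emeasure lborel ((I x - hpd_rule \<kappa> H k x) \<union> (hpd_rule \<kappa> H k x - I x)) = 0"
    using hpd_slack_eq_0_imp_null[of k I x] k I_sets by (simp add: suminf_eq_zero_iff null_setsD1)
qed

end

theorem theorem4p1:
  fixes \<kappa> \<beta> :: real and H :: "real measure"
  assumes "\<kappa> > 0"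
    and "prob_space H" and "sets H = sets borel" and "measure H {0<..} = 1"
    and "0 < \<beta>" and "\<beta> < 1"
  shows "(\<exists>!k. k \<ge> 0 \<and> coverage \<kappa> H (hpd_rule \<kappa> H k) = 1 - \<beta>) \<and>
         (\<forall>k. k \<ge> 0 \<and> coverage \<kappa> H (hpd_rule \<kappa> H k) = 1 - \<beta> \<longrightarrow>
           (\<forall>I. meas_rule I \<and> coverage \<kappa> H I \<ge> 1 - \<beta> \<longrightarrow>
              exp_length \<kappa> H (hpd_rule \<kappa> H k) \<le> exp_length \<kappa> H I
              \<and> (exp_length \<kappa> H I = exp_length \<kappa> H (hpd_rule \<kappa> H k) \<longrightarrow>
                   (\<forall>x. emeasure lborel ((I x - hpd_rule \<kappa> H k x) \<union> (hpd_rule \<kappa> H k x - I x)) = 0))))"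
proof -
  have "real_distribution H"
    using assms(2,3) by (simp add: real_distribution_def real_distribution_axioms_def)
  then interpret poisson_gamma_mixture H \<kappa>
    using assms(1,4) by (simp add: poisson_gamma_mixture_def poisson_gamma_mixture_axioms_def)
  have level_pos: "k > 0" if "k \<ge> 0" "coverage \<kappa> H (hpd_rule \<kappa> H k) = 1 - \<beta>" for k
    using that coverage_hpd_rule_0 assms(5) by (cases "k = 0") auto
  show ?thesis
  proof (intro conjI allI impI)
    obtain k where "k > 0" "coverage \<kappa> H (hpd_rule \<kappa> H k) = 1 - \<beta>"
      using exists_hpd_level assms(5,6) by blast
    then show "\<exists>!k. k \<ge> 0 \<and> coverage \<kappa> H (hpd_rule \<kappa> H k) = 1 - \<beta>"
      using hpd_level_unique assms(5,6) by (intro ex1I[of _ k]) auto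
  next
    fix k I x
    assume k: "k \<ge> 0 \<and> coverage \<kappa> H (hpd_rule \<kappa> H k) = 1 - \<beta>"
      and I: "meas_rule I \<and> 1 - \<beta> \<le> coverage \<kappa> H I"
    then show "exp_length \<kappa> H (hpd_rule \<kappa> H k) \<le> exp_length \<kappa> H I"
      using hpd_rule_optimal(1)[OF level_pos] by auto
    assume "exp_length \<kappa> H I = exp_length \<kappa> H (hpd_rule \<kappa> H k)"
    then show "emeasure lborel ((I x - hpd_rule \<kappa> H k x) \<union> (hpd_rule \<kappa> H k x - I x)) = 0"
      using hpd_rule_optimal(2)[OF level_pos] k I by auto
  qed
qed

end
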